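(* Let $\mathcal A$ be an NFA and let $R$ be a strict partial order on its states with $R\subseteq\ \subseteq^{\mathrm{fw}}$. Then $P(\mathrm{id},R)$ is good for pruning on NFA: $\mathcal L(\mathrm{Prune}(\mathcal A,P(\mathrm{id},R)))=\mathcal L(\mathcal A)$. In particular this holds for $R$ the strict part of $\subseteq^{\mathrm{fw}}$.
   Context: An NFA is $\mathcal A=(\Sigma,Q,I,F,\delta)$, $\delta\subseteq Q\times\Sigma\times Q$ (assumed forward and backward complete); its language is the set of finite words $w$ having a finite trace on $w$ starting in $I$ and ending in $F$ (the empty trace on $\varepsilon$ is a single state). Forward finite trace inclusion: $p\subseteq^{\mathrm{fw}}q$ iff for every finite word $w$, if there is a finite $w$-trace from $p$ ending in $F$ then there is a finite $w$-trace from $q$ ending in $F$. Strict part: $p\subseteq q$ and not $q\subseteq p$. $\mathrm{Prune}(\mathcal A,P)$ has transition set $\{t\in\delta:\nexists t'\in\delta,(t,t')\in P\}$; $P(R_b,R_f)=\{((p,\sigma,r),(p',\sigma,r'))\in\delta\times\delta:p\,R_b\,p',\ r\,R_f\,r'\}$; $\mathrm{id}$ is the identity relation. *)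

theory Defs
  imports Main
begin

record ('q, 'a) nfa =
  alph   :: "'a set"
  states :: "'q set"
  init   :: "'q set"
  final  :: "'q set"
  delta  :: "('q \<times> 'a \<times> 'q) set"

definition is_nfa :: "('q, 'a) nfa \<Rightarrow> bool" where
  "is_nfa A \<longleftrightarrow> finite (alph A) \<and> finite (states A)
     \<and> init A \<subseteq> states A \<and> final A \<subseteq> states A
     \<and> delta A \<subseteq> states A \<times> alph A \<times> states A
     \<and> (\<forall>p\<in>states A. \<forall>a\<in>alph A. \<exists>r. (p, a, r) \<in> delta A)
     \<and> (\<forall>r\<in>states A. \<forall>a\<in>alph A. \<exists>p. (p, a, r) \<in> delta A)"

inductive path :: "('q \<times> 'a \<times> 'q) set \<Rightarrow> 'q \<Rightarrow> 'a list \<Rightarrow> 'q \<Rightarrow> bool"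
  for d where
  path_nil: "path d p [] p"
| path_cons: "(p, a, r) \<in> d \<Longrightarrow> path d r w q \<Longrightarrow> path d p (a # w) q"

definition lang :: "('q, 'a) nfa \<Rightarrow> 'a list set" where
  "lang A = {w. \<exists>p\<in>init A. \<exists>q\<in>final A. path (delta A) p w q}"

definition fw_incl :: "('q, 'a) nfa \<Rightarrow> ('q \<times> 'q) set" where
  "fw_incl A = {(p, q). p \<in> states A \<and> q \<in> states A \<and>
     (\<forall>w. (\<exists>f\<in>final A. path (delta A) p w f) \<longrightarrow> (\<exists>f\<in>final A. path (delta A) q w f))}"

definition strict_part :: "('q \<times> 'q) set \<Rightarrow> ('q \<times> 'q) set" where
  "strict_part S = {(p, q). (p, q) \<in> S \<and> (q, p) \<notin> S}"

definition strict_partial_order :: "('q \<times> 'q) set \<Rightarrow> bool" where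
  "strict_partial_order R \<longleftrightarrow> irrefl R \<and> trans R"

definition Prel :: "('q, 'a) nfa \<Rightarrow> ('q \<times> 'q) set \<Rightarrow> ('q \<times> 'q) set
    \<Rightarrow> (('q \<times> 'a \<times> 'q) \<times> ('q \<times> 'a \<times> 'q)) set" where
  "Prel A Rb Rf = {((p, a, r), (p', a', r')). (p, a, r) \<in> delta A \<and> (p', a', r') \<in> delta A
      \<and> a' = a \<and> (p, p') \<in> Rb \<and> (r, r') \<in> Rf}"

definition prune :: "('q, 'a) nfa \<Rightarrow> (('q \<times> 'a \<times> 'q) \<times> ('q \<times> 'a \<times> 'q)) set \<Rightarrow> ('q, 'a) nfa" where
  "prune A P = A\<lparr>delta := {t \<in> delta A. \<not> (\<exists>t'\<in>delta A. (t, t') \<in> P)}\<rparr>"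

end

theory Submission
  imports Defs
begin

text \<open>Among the a-successors of p from which w is accepted, choose one that is maximal for R; it
  exists because R is a finite strict order. A transition to it is dominated in P(id, R) only by a
  transition to an R-larger successor, which by R \<subseteq> fw_incl would again accept w, contradicting
  maximality. So it survives the pruning, and induction on w rebuilds every accepting run inside the
  pruned automaton.\<close>

inductive_cases path_NilE: "path d p [] q"
inductive_cases path_ConsE: "path d p (a # w) q"

lemma path_mono: "path d p w q \<Longrightarrow> d \<subseteq> d' \<Longrightarrow> path d' p w q"
  by (induction rule: path.induct) (auto intro: path.intros)

lemma wf_converse_if_finite_strict_partial_order:
  assumes "finite R" and "strict_partial_order R"
  shows "wf (R\<inverse>)"
proof -
  have "acyclic R"
    using assms(2) by (simp add: strict_partial_order_def acyclic_irrefl trancl_id)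
  then show ?thesis
    using assms(1) by (simp add: finite_acyclic_wf)
qed

lemma delta_prune_subset: "delta (prune A P) \<subseteq> delta A"
  unfolding prune_def by auto

lemma prune_simps [simp]:
  "init (prune A P) = init A" "final (prune A P) = final A"
  unfolding prune_def by simp_all

lemma fw_incl_accepts:
  assumes "(p, q) \<in> fw_incl A" and "f \<in> final A" and "path (delta A) p w f"
  obtains f' where "f' \<in> final A" and "path (delta A) q w f'"
  using assms unfolding fw_incl_def by blast

lemma surviving_accepting_successor:
  assumes wf: "wf (R\<inverse>)" and R_fw: "R \<subseteq> fw_incl A"
    and step: "(p, a, r0) \<in> delta A" and f0: "f0 \<in> final A" and run: "path (delta A) r0 w f0"
  obtains r f where "(p, a, r) \<in> delta (prune A (Prel A Id R))"
    and "f \<in> final A" and "path (delta A) r w f"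
proof -
  define S where "S = {r. (p, a, r) \<in> delta A \<and> (\<exists>f\<in>final A. path (delta A) r w f)}"
  have "r0 \<in> S" using step f0 run unfolding S_def by blast
  then obtain r where r: "r \<in> S" and maximal: "\<And>r'. (r', r) \<in> R\<inverse> \<Longrightarrow> r' \<notin> S"
    by (rule wfE_min[OF wf]) blast
  then obtain f where f: "f \<in> final A" "path (delta A) r w f"
    unfolding S_def by blast
  have "\<not> (\<exists>t'\<in>delta A. ((p, a, r), t') \<in> Prel A Id R)"
  proof
    assume "\<exists>t'\<in>delta A. ((p, a, r), t') \<in> Prel A Id R"
    then obtain r' where "(p, a, r') \<in> delta A" and "(r, r') \<in> R"
      unfolding Prel_def by auto
    moreover from \<open>(r, r') \<in> R\<close> R_fw f obtain f' where "f' \<in> final A" "path (delta A) r' w f'"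
      by (blast elim: fw_incl_accepts)
    ultimately have "r' \<in> S" unfolding S_def by blast
    with maximal \<open>(r, r') \<in> R\<close> show False by simp
  qed
  then have "(p, a, r) \<in> delta (prune A (Prel A Id R))"
    using r unfolding S_def prune_def by simp
  then show thesis using f by (rule that)
qed

lemma accepting_path_in_prune:
  assumes wf: "wf (R\<inverse>)" and R_fw: "R \<subseteq> fw_incl A"
  shows "path (delta A) p w f \<Longrightarrow> f \<in> final A \<Longrightarrow>
    \<exists>f'\<in>final A. path (delta (prune A (Prel A Id R))) p w f'"
proof (induction w arbitrary: p f)
  case Nil
  then show ?case by (auto elim: path_NilE intro: path_nil)
next
  case (Cons a w)
  from Cons.prems(1) obtain r0 where r0: "(p, a, r0) \<in> delta A" "path (delta A) r0 w f"
    by (auto elim: path_ConsE)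
  obtain r f1 where step: "(p, a, r) \<in> delta (prune A (Prel A Id R))"
    and "f1 \<in> final A" "path (delta A) r w f1"
    by (rule surviving_accepting_successor[OF wf R_fw r0(1) Cons.prems(2) r0(2)])
  then obtain f' where "f' \<in> final A" "path (delta (prune A (Prel A Id R))) r w f'"
    using Cons.IH by blast
  with step show ?case by (blast intro: path_cons)
qed

lemma lang_prune_Prel_Id:
  assumes "wf (R\<inverse>)" and "R \<subseteq> fw_incl A"
  shows "lang (prune A (Prel A Id R)) = lang A"
proof
  show "lang (prune A (Prel A Id R)) \<subseteq> lang A"
    unfolding lang_def by (auto intro: path_mono[OF _ delta_prune_subset])
  show "lang A \<subseteq> lang (prune A (Prel A Id R))"
  proof
    fix w assume "w \<in> lang A"
    then obtain p f where "p \<in> init A" and run: "path (delta A) p w f" "f \<in> final A"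
      unfolding lang_def by blast
    moreover obtain f' where "f' \<in> final A" "path (delta (prune A (Prel A Id R))) p w f'"
      using accepting_path_in_prune[OF assms run] by blast
    ultimately show "w \<in> lang (prune A (Prel A Id R))"
      unfolding lang_def by auto
  qed
qed

lemma strict_partial_order_strict_part_fw_incl:
  "strict_partial_order (strict_part (fw_incl A))"
  unfolding strict_partial_order_def strict_part_def irrefl_def trans_def fw_incl_def by blast

theorem theorem5p6:
  fixes A :: "('q, 'a) nfa"
  assumes "is_nfa A"
  shows "(\<forall>R. R \<subseteq> states A \<times> states A \<and> strict_partial_order R \<and> R \<subseteq> fw_incl A
            \<longrightarrow> lang (prune A (Prel A Id R)) = lang A)
       \<and> lang (prune A (Prel A Id (strict_part (fw_incl A)))) = lang A"
proof -
  have finite_states: "finite (states A \<times> states A)"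
    using assms unfolding is_nfa_def by simp
  have good: "lang (prune A (Prel A Id R)) = lang A"
    if "R \<subseteq> states A \<times> states A" "strict_partial_order R" "R \<subseteq> fw_incl A" for R
  proof (rule lang_prune_Prel_Id)
    have "finite R" using that(1) finite_states by (rule finite_subset)
    then show "wf (R\<inverse>)"
      using that(2) by (rule wf_converse_if_finite_strict_partial_order)
  qed (fact that(3))
  have "strict_part (fw_incl A) \<subseteq> fw_incl A"
    unfolding strict_part_def by auto
  moreover have "fw_incl A \<subseteq> states A \<times> states A"
    unfolding fw_incl_def by auto
  ultimately have "lang (prune A (Prel A Id (strict_part (fw_incl A)))) = lang A"
    using strict_partial_order_strict_part_fw_incl by (intro good) simp_all
  with good show ?thesis by auto
qed

end
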